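(* For all integers $r\ge 3$ and $n\ge 2$, $$m_0(1,\underbrace{n,\dots,n}_{r})=n^{r-1}-(n-1)^{r-1}+n-1.$$
   Context: For integers $n_1\ge\dots\ge n_r$, let $X_\ell=[n_\ell]=\{1,\dots,n_\ell\}$. An $r$-partite $r$-graph is a family $\mathcal F\subseteq X_1\times\dots\times X_r$; its vertices are the pairs $(\ell,x)$ with $x\in X_\ell$, and an edge $A=(a_1,\dots,a_r)$ contains the vertex $(\ell,x)$ iff $a_\ell=x$. Two edges $A,B$ are disjoint if $A[\ell]\ne B[\ell]$ for all $\ell$ (where $A[\ell]$ is the $\ell$-th coordinate). The matching number $\nu(\mathcal F)$ is the maximum number of pairwise disjoint edges of $\mathcal F$. A transversal is a set $T$ of vertices such that every edge of $\mathcal F$ contains a vertex of $T$; $\tau(\mathcal F)$ is the minimum size of a transversal. For integers $r\ge 3$ and $n_1\ge\dots\ge n_r>s\ge 1$, $m_0(s,n_1,\dots,n_r)$ denotes the maximum of $|\mathcal F|$ over all $\mathcal F\subseteq X_1\times\dots\times X_r$ with $\nu(\mathcal F)\le s<\tau(\mathcal F)$. *)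

theory Defs
  imports Main
begin

text \<open>Edges of an r-partite r-graph on parts X_l = {1..n_l} (l = 0..r-1) are lists
  A of length r with 1 \<le> A!l \<le> n_l. The list ns = [n_1,...,n_r].\<close>

definition box :: "nat list \<Rightarrow> nat list set" where
  "box ns = {A. length A = length ns \<and> (\<forall>l<length ns. 1 \<le> A!l \<and> A!l \<le> ns!l)}"

definition vertices :: "nat list \<Rightarrow> (nat \<times> nat) set" where
  "vertices ns = {(l,x). l < length ns \<and> 1 \<le> x \<and> x \<le> ns!l}"

definition edge_disjoint :: "nat list \<Rightarrow> nat list \<Rightarrow> bool" where
  "edge_disjoint A B \<longleftrightarrow> (\<forall>l<length A. A!l \<noteq> B!l)"

definition matching_number :: "nat list set \<Rightarrow> nat" where
  "matching_number F = Max {card M | M. M \<subseteq> F \<and> pairwise edge_disjoint M}"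

definition is_transversal :: "nat list \<Rightarrow> nat list set \<Rightarrow> (nat \<times> nat) set \<Rightarrow> bool" where
  "is_transversal ns F T \<longleftrightarrow> T \<subseteq> vertices ns \<and> (\<forall>A\<in>F. \<exists>l<length A. (l, A!l) \<in> T)"

definition transversal_number :: "nat list \<Rightarrow> nat list set \<Rightarrow> nat" where
  "transversal_number ns F = Min {card T | T. is_transversal ns F T}"

definition m0 :: "nat \<Rightarrow> nat list \<Rightarrow> nat" where
  "m0 s ns = Max {card F | F. F \<subseteq> box ns \<and> matching_number F \<le> s \<and> s < transversal_number ns F}"

end

theory Submission
  imports Defs
begin

text \<open>
  Edges are words of length \<open>r\<close> over \<open>{1..n}\<close>, and two edges are disjoint iff the words agree
  in no coordinate. So \<open>\<nu>(F) \<le> 1\<close> means that \<open>F\<close> is intersecting, and \<open>\<tau>(F) \<ge> 2\<close> means that no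
  coordinate is constant on \<open>F\<close> (\<open>F\<close> is nontrivial). With \<open>m = r - 1\<close>, the words \<open>1 v\<close> with \<open>v\<close>
  meeting \<open>b = 2\<dots>2\<close>, together with the words \<open>y b\<close> for \<open>y \<ge> 2\<close>, form such a family of size
  \<open>n^m - (n-1)^m + n - 1\<close>.

  For the upper bound enlarge \<open>F\<close> to a saturated intersecting family and consider its core: the
  tails (words with the first letter removed) that meet every tail. A core tail occurs with all
  \<open>n\<close> first letters, any other tail with exactly one. If the core is empty, the tails occurring
  with a fixed first letter and the remaining tails form a nonempty cross-intersecting pair. If some
  coordinate is constant on the core, deleting it again yields a cross-intersecting pair. Otherwise
  the core is nontrivial, and \<open>F\<close> splits by the cyclic difference of its first two letters into
  \<open>n\<close> nontrivial intersecting families of shorter words, to which induction applies. Nonempty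
  cross-intersecting families \<open>A\<close>, \<open>B\<close> of words of length \<open>k\<close> satisfy
  \<open>|A| + |B| \<le> n^k - (n-1)^k + 1\<close>, again by induction on \<open>k\<close>.
\<close>

section \<open>Words and meeting words\<close>

definition words :: "nat \<Rightarrow> nat \<Rightarrow> nat list set" where
  "words n k = {v. length v = k \<and> set v \<subseteq> {1..n}}"

definition meets :: "nat list \<Rightarrow> nat list \<Rightarrow> bool" where
  "meets u v \<longleftrightarrow> (\<exists>i<length u. u!i = v!i)"

definition cross_intersecting :: "nat list set \<Rightarrow> nat list set \<Rightarrow> bool" where
  "cross_intersecting A B \<longleftrightarrow> (\<forall>a\<in>A. \<forall>b\<in>B. meets a b)"

definition intersecting :: "nat list set \<Rightarrow> bool" where
  "intersecting F \<longleftrightarrow> cross_intersecting F F"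

definition nontrivial :: "nat \<Rightarrow> nat list set \<Rightarrow> bool" where
  "nontrivial k F \<longleftrightarrow> F \<noteq> {} \<and> (\<forall>i<k. \<forall>x. \<exists>v\<in>F. v!i \<noteq> x)"

definition meeting_all :: "nat \<Rightarrow> nat \<Rightarrow> nat list set \<Rightarrow> nat list set" where
  "meeting_all n k B = {v \<in> words n k. \<forall>b\<in>B. meets v b}"

definition slice :: "nat list set \<Rightarrow> nat \<Rightarrow> nat list set" where
  "slice A y = {v. y # v \<in> A}"

definition meeting_count :: "nat \<Rightarrow> nat \<Rightarrow> nat" where
  "meeting_count n k = n^k - (n-1)^k"

lemma words_0 [simp]: "words n 0 = {[]}"
  unfolding words_def by auto

lemma Cons_in_words [simp]: "y # v \<in> words n (Suc k) \<longleftrightarrow> y \<in> {1..n} \<and> v \<in> words n k"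
  unfolding words_def by auto

lemma in_words_SucE:
  assumes "w \<in> words n (Suc k)"
  obtains y v where "w = y # v" "y \<in> {1..n}" "v \<in> words n k"
  using assms unfolding words_def by (cases w) auto

lemma length_words: "v \<in> words n k \<Longrightarrow> length v = k"
  unfolding words_def by simp

lemma nth_in_words: "v \<in> words n k \<Longrightarrow> i < k \<Longrightarrow> v!i \<in> {1..n}"
  unfolding words_def by (auto dest: nth_mem)

lemma finite_words [simp]: "finite (words n k)"
  unfolding words_def using finite_lists_length_eq[of "{1..n}" k] by (simp add: conj_commute)

lemma card_words: "card (words n k) = n^k"
  unfolding words_def using card_lists_length_eq[of "{1..n}" k] by (simp add: conj_commute)

lemma finite_subset_words: "A \<subseteq> words n k \<Longrightarrow> finite A"
  using finite_subset finite_words by blast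

lemma card_subset_words: "A \<subseteq> words n k \<Longrightarrow> card A \<le> n^k"
  using card_mono[OF finite_words] card_words by metis

lemma meets_Nil [simp]: "\<not> meets [] v"
  by (simp add: meets_def)

lemma meets_Cons [simp]: "meets (y # u) (z # v) \<longleftrightarrow> y = z \<or> meets u v"
proof
  assume "meets (y # u) (z # v)"
  then obtain i where "i < Suc (length u)" "(y # u)!i = (z # v)!i"
    unfolding meets_def by auto
  then show "y = z \<or> meets u v"
    unfolding meets_def by (cases i) auto
next
  assume "y = z \<or> meets u v"
  then show "meets (y # u) (z # v)"
    unfolding meets_def by (auto intro: exI[of _ "Suc _"])
qed

lemma meets_sym: "length u = length v \<Longrightarrow> meets u v \<Longrightarrow> meets v u"
  unfolding meets_def by metis

lemma meets_refl: "u \<noteq> [] \<Longrightarrow> meets u u"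
  unfolding meets_def by auto

lemma cross_intersecting_sym:
  "A \<subseteq> words n k \<Longrightarrow> B \<subseteq> words n k \<Longrightarrow> cross_intersecting A B \<Longrightarrow> cross_intersecting B A"
  unfolding cross_intersecting_def by (metis length_words meets_sym subsetD)

lemma card_Cons_image_times: "card ((\<lambda>(y, v). y # v) ` (Y \<times> V)) = card Y * card V"
  by (simp add: card_image card_cartesian_product inj_on_def)

lemma card_avoiding: "b \<in> words n k \<Longrightarrow> card {v \<in> words n k. \<not> meets v b} = (n-1)^k"
proof (induction k arbitrary: b)
  case (Suc k)
  then obtain c b' where b: "b = c # b'" "c \<in> {1..n}" "b' \<in> words n k"
    by (auto elim: in_words_SucE)
  have "{v \<in> words n (Suc k). \<not> meets v b}
      = (\<lambda>(y, v). y # v) ` (({1..n} - {c}) \<times> {v \<in> words n k. \<not> meets v b'})"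
  proof (intro equalityI subsetI)
    fix w assume w: "w \<in> {v \<in> words n (Suc k). \<not> meets v b}"
    then obtain y v where "w = y # v" "y \<in> {1..n}" "v \<in> words n k"
      by (auto elim: in_words_SucE)
    with w b show "w \<in> (\<lambda>(y, v). y # v) ` (({1..n} - {c}) \<times> {v \<in> words n k. \<not> meets v b'})"
      by auto
  qed (use b in auto)
  then have "card {v \<in> words n (Suc k). \<not> meets v b}
      = card ({1..n} - {c}) * card {v \<in> words n k. \<not> meets v b'}"
    by (simp only: card_Cons_image_times)
  then show ?case
    using b Suc.IH by simp
next
  case 0
  have "{v \<in> words n 0. \<not> meets v b} = {[]}" by auto
  then show ?case by simp
qed

lemma card_meeting: "b \<in> words n k \<Longrightarrow> card {v \<in> words n k. meets v b} = meeting_count n k"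
proof -
  assume b: "b \<in> words n k"
  have "card ({v \<in> words n k. meets v b} \<union> {v \<in> words n k. \<not> meets v b})
      = card {v \<in> words n k. meets v b} + card {v \<in> words n k. \<not> meets v b}"
    by (rule card_Un_disjoint) auto
  moreover have "{v \<in> words n k. meets v b} \<union> {v \<in> words n k. \<not> meets v b} = words n k"
    by auto
  ultimately show ?thesis
    using card_avoiding[OF b] card_words[of n k] unfolding meeting_count_def by simp
qed

lemma card_meeting_le:
  assumes "X \<subseteq> words n k" "b \<in> words n k" "\<forall>v\<in>X. meets v b"
  shows "card X \<le> meeting_count n k"
proof -
  have "X \<subseteq> {v \<in> words n k. meets v b}" using assms by auto
  then have "card X \<le> card {v \<in> words n k. meets v b}" by (rule card_mono[rotated]) simp
  then show ?thesis using card_meeting[OF assms(2)] by simp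
qed

lemma slice_subset_words: "A \<subseteq> words n (Suc k) \<Longrightarrow> slice A y \<subseteq> words n k"
  unfolding slice_def by auto

lemma card_eq_sum_slices:
  assumes A: "A \<subseteq> words n (Suc k)"
  shows "card A = (\<Sum>y\<in>{1..n}. card (slice A y))"
proof -
  have "A \<subseteq> (\<lambda>(y, v). y # v) ` (SIGMA y:{1..n}. slice A y)"
  proof
    fix w assume w: "w \<in> A"
    then have "w \<in> words n (Suc k)" using A by blast
    then obtain y v where "w = y # v" "y \<in> {1..n}"
      by (rule in_words_SucE)
    with w show "w \<in> (\<lambda>(y, v). y # v) ` (SIGMA y:{1..n}. slice A y)"
      unfolding slice_def by force
  qed
  moreover have "(\<lambda>(y, v). y # v) ` (SIGMA y:{1..n}. slice A y) \<subseteq> A"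
    by (auto simp: slice_def)
  ultimately have "(\<lambda>(y, v). y # v) ` (SIGMA y:{1..n}. slice A y) = A"
    by (rule equalityI[rotated])
  moreover have "inj_on (\<lambda>(y, v). y # v) (SIGMA y:{1..n}. slice A y)"
    by (auto simp: inj_on_def)
  moreover have "finite (slice A y)" for y
    using finite_subset_words[OF slice_subset_words[OF A]] .
  ultimately show ?thesis
    by (metis card_SigmaI card_image finite_atLeastAtMost)
qed

lemma of_nat_meeting_count: "int (meeting_count n k) = int n ^ k - int (n-1) ^ k"
  unfolding meeting_count_def by (simp add: of_nat_diff power_mono)

lemma meeting_count_Suc:
  assumes "n \<ge> 1"
  shows "meeting_count n (Suc k) = n^k + (n-1) * meeting_count n k"
proof -
  have "int (meeting_count n (Suc k)) = int (n^k + (n-1) * meeting_count n k)"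
    unfolding of_nat_add of_nat_mult of_nat_power of_nat_meeting_count
    using assms by (simp add: of_nat_diff algebra_simps)
  then show ?thesis by (simp only: of_nat_eq_iff)
qed

lemma pow_le_meeting_count:
  assumes "n \<ge> 1"
  shows "n^k \<le> (n-1) * meeting_count n k + 1"
proof (induction k)
  case (Suc k)
  obtain q where n: "n = Suc q" using assms by (cases n) auto
  have "q * meeting_count n k \<le> q * (q * meeting_count n k)"
    by (cases q) auto
  moreover have "n^k \<le> q * meeting_count n k + 1"
    using Suc.IH n by simp
  ultimately have "n^k \<le> q * (q * meeting_count n k) + 1"
    by linarith
  then have "n * n^k \<le> q * (n^k + q * meeting_count n k) + 1"
    unfolding n by (simp add: algebra_simps)
  then show ?case using meeting_count_Suc[OF assms] n by simp
qed simp

lemma mult_meeting_count_le: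
  assumes "n \<ge> 1" "j < k"
  shows "n * (meeting_count n k + (n-1)^j) \<le> meeting_count n (Suc k) + (n-1)^j"
proof -
  obtain q where n: "n = Suc q" using assms by (cases n) auto
  have "q^Suc j \<le> q^k"
    using assms power_increasing[of "Suc j" k q] by (cases "q = 0") auto
  then have "int q * int q ^ j \<le> int q ^ k"
    by (metis of_nat_le_iff of_nat_mult of_nat_power power_Suc)
  then have "(int q + 1) * ((int q + 1) ^ k - int q ^ k + int q ^ j)
      \<le> (int q + 1) * (int q + 1) ^ k - int q * int q ^ k + int q ^ j"
    by (simp add: algebra_simps)
  then have "int (n * (meeting_count n k + (n-1)^j)) \<le> int (meeting_count n (Suc k) + (n-1)^j)"
    unfolding of_nat_mult of_nat_add of_nat_meeting_count of_nat_power n by (simp add: add.commute)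
  then show ?thesis by (simp only: of_nat_le_iff)
qed

section \<open>Deleting a coordinate\<close>

definition remove_nth :: "nat \<Rightarrow> 'a list \<Rightarrow> 'a list" where
  "remove_nth j v = take j v @ drop (Suc j) v"

lemma length_remove_nth: "j < length v \<Longrightarrow> length (remove_nth j v) = length v - 1"
  unfolding remove_nth_def by simp

lemma nth_remove_nth:
  "j < length v \<Longrightarrow> i < length v - 1 \<Longrightarrow> remove_nth j v ! i = (if i < j then v!i else v!Suc i)"
  unfolding remove_nth_def by (auto simp: nth_append min_def)

lemma remove_nth_in_words: "v \<in> words n (Suc k) \<Longrightarrow> j \<le> k \<Longrightarrow> remove_nth j v \<in> words n k"
  unfolding words_def remove_nth_def
  using set_take_subset[of j v] set_drop_subset[of "Suc j" v] by auto

lemma remove_nth_inj: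
  assumes "length u = length v" "j < length u" "u!j = v!j" "remove_nth j u = remove_nth j v"
  shows "u = v"
proof -
  have "take j u = take j v" "drop (Suc j) u = drop (Suc j) v"
    using assms unfolding remove_nth_def by (auto simp: append_eq_append_conv)
  then show ?thesis
    using id_take_nth_drop[OF assms(2)] id_take_nth_drop[of j v] assms(1-3) by metis
qed

lemma meets_remove_nth:
  assumes "length u = length v" "j < length u" "meets u v" "u!j \<noteq> v!j"
  shows "meets (remove_nth j u) (remove_nth j v)"
proof -
  obtain i where i: "i < length u" "u!i = v!i"
    using assms(3) unfolding meets_def by blast
  with assms(4) have "i \<noteq> j" by auto
  define i' where "i' = (if i < j then i else i - 1)"
  have "i' < length u - 1" "remove_nth j u ! i' = u!i" "remove_nth j v ! i' = v!i"
    using i \<open>i \<noteq> j\<close> assms(1,2) by (auto simp: i'_def nth_remove_nth)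
  then show ?thesis
    using i(2) assms(2) unfolding meets_def by (auto simp: length_remove_nth)
qed

lemma inj_on_remove_nth:
  assumes "B \<subseteq> words n (Suc m)" "j \<le> m" "\<forall>b\<in>B. b!j = x"
  shows "inj_on (remove_nth j) B"
proof (rule inj_onI)
  fix u v assume "u \<in> B" "v \<in> B" "remove_nth j u = remove_nth j v"
  with assms show "u = v"
    using remove_nth_inj[of u v j] length_words by (metis le_imp_less_Suc subsetD)
qed

lemma card_coord_eq_le:
  assumes "A \<subseteq> words n (Suc m)" "j \<le> m"
  shows "card {a \<in> A. a!j = x} \<le> n^m"
proof -
  have "remove_nth j ` {a \<in> A. a!j = x} \<subseteq> words n m"
    using assms remove_nth_in_words by blast
  then have "card (remove_nth j ` {a \<in> A. a!j = x}) \<le> n^m"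
    by (rule card_subset_words)
  moreover have "inj_on (remove_nth j) {a \<in> A. a!j = x}"
    using assms by (intro inj_on_remove_nth[where x = x]) auto
  ultimately show ?thesis by (simp add: card_image)
qed

lemma remove_nth_in_meeting_all:
  assumes "A \<subseteq> words n (Suc m)" "B \<subseteq> words n (Suc m)" "cross_intersecting A B"
    and "j \<le> m" "\<forall>b\<in>B. b!j = x" and "a \<in> A" "a!j \<noteq> x"
  shows "remove_nth j a \<in> meeting_all n m (remove_nth j ` B)"
  unfolding meeting_all_def
proof (intro CollectI conjI ballI)
  show "remove_nth j a \<in> words n m"
    using assms remove_nth_in_words by blast
  fix b' assume "b' \<in> remove_nth j ` B"
  then obtain b where "b \<in> B" "b' = remove_nth j b" by blast
  with assms show "meets (remove_nth j a) b'"
    using meets_remove_nth[of a b j] length_words unfolding cross_intersecting_def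
    by (metis le_imp_less_Suc subsetD)
qed

lemma card_coord_neq_le:
  assumes A: "A \<subseteq> words n (Suc m)" and B: "B \<subseteq> words n (Suc m)" "cross_intersecting A B"
    and j: "j \<le> m" and x: "x \<in> {1..n}" and "\<forall>b\<in>B. b!j = x"
  shows "card {a \<in> A. a!j \<noteq> x} \<le> (n-1) * card (meeting_all n m (remove_nth j ` B))"
proof -
  let ?T = "meeting_all n m (remove_nth j ` B)"
  have "inj_on (\<lambda>a. (a!j, remove_nth j a)) {a \<in> A. a!j \<noteq> x}"
  proof (rule inj_onI)
    fix u v assume u: "u \<in> {a \<in> A. a!j \<noteq> x}" and v: "v \<in> {a \<in> A. a!j \<noteq> x}"
      and eq: "(u!j, remove_nth j u) = (v!j, remove_nth j v)"
    have "length u = Suc m" "length v = Suc m"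
      using u v A length_words by blast+
    with eq j show "u = v"
      using remove_nth_inj[of u v j] by simp
  qed
  moreover have "(\<lambda>a. (a!j, remove_nth j a)) ` {a \<in> A. a!j \<noteq> x} \<subseteq> ({1..n} - {x}) \<times> ?T"
    using assms remove_nth_in_meeting_all[OF A B] nth_in_words by fastforce
  moreover have "finite (({1..n} - {x}) \<times> ?T)"
    unfolding meeting_all_def by simp
  ultimately have "card {a \<in> A. a!j \<noteq> x} \<le> card (({1..n} - {x}) \<times> ?T)"
    by (rule card_inj_on_le)
  then show ?thesis
    using x by (simp add: card_cartesian_product)
qed

lemma card_le_cross_fixed_coord:
  assumes "A \<subseteq> words n (Suc m)" "B \<subseteq> words n (Suc m)" "cross_intersecting A B"
    and "j \<le> m" "x \<in> {1..n}" "\<forall>b\<in>B. b!j = x"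
  shows "card A \<le> n^m + (n-1) * card (meeting_all n m (remove_nth j ` B))"
proof -
  have "{a \<in> A. a!j = x} = A \<inter> {a. a!j = x}" "{a \<in> A. a!j \<noteq> x} = A - {a. a!j = x}"
    by auto
  then have "card A = card {a \<in> A. a!j = x} + card {a \<in> A. a!j \<noteq> x}"
    using card_Int_Diff[OF finite_subset_words[OF assms(1)], of "{a. a!j = x}"] by simp
  then show ?thesis
    using card_coord_eq_le[OF assms(1,4), of x] card_coord_neq_le[OF assms] by linarith
qed

section \<open>Cross-intersecting families\<close>

definition cyclic_shift :: "nat \<Rightarrow> nat \<Rightarrow> nat \<Rightarrow> nat" where
  "cyclic_shift n c a = (if a + c \<le> n then a + c else a + c - n)"

lemma cyclic_shift_in_range: "a \<in> {1..n} \<Longrightarrow> c < n \<Longrightarrow> cyclic_shift n c a \<in> {1..n}"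
  unfolding cyclic_shift_def by auto

lemma cyclic_shift_0: "a \<le> n \<Longrightarrow> cyclic_shift n 0 a = a"
  unfolding cyclic_shift_def by simp

lemma cyclic_shift_inj:
  "a \<in> {1..n} \<Longrightarrow> a' \<in> {1..n} \<Longrightarrow> c < n \<Longrightarrow> cyclic_shift n c a = cyclic_shift n c a' \<Longrightarrow> a = a'"
  unfolding cyclic_shift_def by (auto split: if_splits)

lemma cyclic_shift_inj_amount:
  "a \<in> {1..n} \<Longrightarrow> c < n \<Longrightarrow> c' < n \<Longrightarrow> cyclic_shift n c a = cyclic_shift n c' a \<Longrightarrow> c = c'"
  unfolding cyclic_shift_def by (auto split: if_splits)

lemma cyclic_shift_surj: "a \<in> {1..n} \<Longrightarrow> y \<in> {1..n} \<Longrightarrow> \<exists>c<n. cyclic_shift n c a = y"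
proof (cases "a \<le> y")
  case True
  moreover assume "a \<in> {1..n}" "y \<in> {1..n}"
  ultimately show ?thesis by (intro exI[of _ "y - a"]) (auto simp: cyclic_shift_def)
next
  case False
  moreover assume "a \<in> {1..n}" "y \<in> {1..n}"
  ultimately show ?thesis by (intro exI[of _ "y + n - a"]) (auto simp: cyclic_shift_def)
qed

lemma bij_betw_cyclic_shift:
  assumes "c < n"
  shows "bij_betw (cyclic_shift n c) {1..n} {1..n}"
proof -
  have "inj_on (cyclic_shift n c) {1..n}"
    using assms cyclic_shift_inj by (auto simp: inj_on_def)
  moreover have "cyclic_shift n c ` {1..n} \<subseteq> {1..n}"
    using assms cyclic_shift_in_range by blast
  ultimately show ?thesis
    by (simp add: bij_betw_def endo_inj_surj)
qed

lemma card_slice_le: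
  assumes A: "A \<subseteq> words n (Suc m)" and B: "B \<subseteq> words n (Suc m)"
    and AB: "cross_intersecting A B" and b: "b \<in> B" "b!0 \<noteq> y"
  shows "card (slice A y) \<le> meeting_count n m"
proof -
  from b B have "b \<in> words n (Suc m)" by blast
  then obtain z b' where zb: "b = z # b'" "b' \<in> words n m"
    by (rule in_words_SucE)
  with AB b have "\<forall>v\<in>slice A y. meets v b'"
    unfolding slice_def cross_intersecting_def by fastforce
  then show ?thesis
    using card_meeting_le[OF slice_subset_words[OF A] zb(2)] by blast
qed

lemma cross_intersecting_slices:
  "cross_intersecting A B \<Longrightarrow> y \<noteq> z \<Longrightarrow> cross_intersecting (slice A y) (slice B z)"
  unfolding cross_intersecting_def slice_def by fastforce

context
  fixes n m :: nat
  assumes n: "n \<ge> 2"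
    and IH: "\<And>X Y. X \<subseteq> words n m \<Longrightarrow> Y \<subseteq> words n m \<Longrightarrow> X \<noteq> {} \<Longrightarrow> Y \<noteq> {}
      \<Longrightarrow> cross_intersecting X Y \<Longrightarrow> card X + card Y \<le> meeting_count n m + 1"
begin

lemma cross_intersecting_card_le_fixed:
  assumes A: "A \<subseteq> words n (Suc m)" and B: "B \<subseteq> words n (Suc m)" "B \<noteq> {}"
    and AB: "cross_intersecting A B"
    and j: "j \<le> m" and x: "x \<in> {1..n}" and Bx: "\<forall>b\<in>B. b!j = x"
  shows "card A + card B \<le> meeting_count n (Suc m) + 1"
proof -
  let ?B' = "remove_nth j ` B"
  let ?T = "meeting_all n m ?B'"
  have B': "?B' \<subseteq> words n m" "?B' \<noteq> {}"
    using B j remove_nth_in_words by auto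
  have "card B = card ?B'"
    using card_image[OF inj_on_remove_nth[OF B(1) j Bx]] by simp
  moreover have "card A \<le> n^m + (n-1) * card ?T"
    by (rule card_le_cross_fixed_coord[OF A B(1) AB j x Bx])
  moreover have "(n-1) * card ?T + card ?B' \<le> (n-1) * meeting_count n m + 1"
  proof (cases "?T = {}")
    case True
    then show ?thesis
      using card_subset_words[OF B'(1)] pow_le_meeting_count[of n m] n by simp
  next
    case False
    have "?T \<subseteq> words n m" "cross_intersecting ?T ?B'"
      unfolding meeting_all_def cross_intersecting_def by auto
    then have sum: "card ?T + card ?B' \<le> meeting_count n m + 1"
      using IH B' False by blast
    obtain b' where "b' \<in> ?B'" using B'(2) by blast
    then have T: "card ?T \<le> meeting_count n m"
      using card_meeting_le[OF \<open>?T \<subseteq> words n m\<close>] B'(1) unfolding meeting_all_def by blast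
    have n_minus_1: "n - 1 = Suc (n - 2)" using n by simp
    have "(n - 2) * card ?T \<le> (n - 2) * meeting_count n m"
      using T by (rule mult_le_mono2)
    then show ?thesis
      using sum unfolding n_minus_1 mult_Suc by linarith
  qed
  ultimately show ?thesis
    using meeting_count_Suc[of n m] n by simp
qed

lemma card_slices_le:
  assumes A: "A \<subseteq> words n (Suc m)" and B: "B \<subseteq> words n (Suc m)"
    and AB: "cross_intersecting A B" and "y \<noteq> z"
    and "card (slice A y) \<le> meeting_count n m" "card (slice B z) \<le> meeting_count n m"
  shows "card (slice A y) + card (slice B z) \<le> meeting_count n m + 1"
proof (cases "slice A y = {} \<or> slice B z = {}")
  case True
  with assms(5,6) show ?thesis by auto
next
  case False
  then show ?thesis
    using IH[OF slice_subset_words[OF A] slice_subset_words[OF B]]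
      cross_intersecting_slices[OF AB \<open>y \<noteq> z\<close>] by blast
qed

lemma cross_intersecting_card_le_unfixed:
  assumes A: "A \<subseteq> words n (Suc m)" and B: "B \<subseteq> words n (Suc m)"
    and AB: "cross_intersecting A B"
    and A_unfixed: "\<forall>y. \<exists>a\<in>A. a!0 \<noteq> y" and B_unfixed: "\<forall>y. \<exists>b\<in>B. b!0 \<noteq> y"
  shows "card A + card B \<le> meeting_count n (Suc m) + 1"
proof -
  have slice_A: "card (slice A y) \<le> meeting_count n m" for y
    using B_unfixed card_slice_le[OF A B AB] by blast
  have slice_B: "card (slice B y) \<le> meeting_count n m" for y
    using A_unfixed card_slice_le[OF B A cross_intersecting_sym[OF A B AB]] by blast
  show ?thesis
  proof (cases "m = 0")
    case True
    then have "card (slice A y) = 0" "card (slice B y) = 0" for y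
      using slice_A slice_B by (simp_all add: meeting_count_def)
    then show ?thesis
      using card_eq_sum_slices[OF A] card_eq_sum_slices[OF B] by simp
  next
    case False
    \<comment> \<open>Pair the slice of \<open>A\<close> at \<open>y\<close> with the slice of \<open>B\<close> at \<open>\<sigma> y \<noteq> y\<close>: they cross-intersect.\<close>
    let ?\<sigma> = "cyclic_shift n 1"
    have \<sigma>: "bij_betw ?\<sigma> {1..n} {1..n}"
      using n by (intro bij_betw_cyclic_shift) auto
    have "card A + card B = (\<Sum>y\<in>{1..n}. card (slice A y) + card (slice B (?\<sigma> y)))"
      using card_eq_sum_slices[OF A] card_eq_sum_slices[OF B]
        sum.reindex_bij_betw[OF \<sigma>, of "\<lambda>y. card (slice B y)"]
      by (simp add: sum.distrib)
    also have "\<dots> \<le> (\<Sum>y\<in>{1..n}. meeting_count n m + 1)"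
    proof (rule sum_mono)
      fix y assume "y \<in> {1..n}"
      then have "y \<noteq> ?\<sigma> y"
        using cyclic_shift_inj_amount[of y n 0 1] cyclic_shift_0[of y n] n by auto
      then show "card (slice A y) + card (slice B (?\<sigma> y)) \<le> meeting_count n m + 1"
        using card_slices_le[OF A B AB] slice_A slice_B by blast
    qed
    also have "\<dots> = n * (meeting_count n m + (n-1)^0)"
      by simp
    also have "\<dots> \<le> meeting_count n (Suc m) + 1"
      using mult_meeting_count_le[of n 0 m] n False by simp
    finally show ?thesis .
  qed
qed

end

theorem cross_intersecting_card_le:
  assumes n: "n \<ge> 2"
  shows "A \<subseteq> words n k \<Longrightarrow> B \<subseteq> words n k \<Longrightarrow> A \<noteq> {} \<Longrightarrow> B \<noteq> {}
    \<Longrightarrow> cross_intersecting A B \<Longrightarrow> card A + card B \<le> meeting_count n k + 1"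
proof (induction k arbitrary: A B)
  case 0
  then have "A = {[]}" "B = {[]}" by auto
  with 0 show ?case unfolding cross_intersecting_def by simp
next
  case (Suc m)
  note step = Suc.IH Suc.prems(1,2)
  consider (B_fixed) x where "\<forall>b\<in>B. b!0 = x"
    | (A_fixed) x where "\<forall>a\<in>A. a!0 = x"
    | (unfixed) "\<forall>y. \<exists>a\<in>A. a!0 \<noteq> y" "\<forall>y. \<exists>b\<in>B. b!0 \<noteq> y"
    by blast
  then show ?case
  proof cases
    case B_fixed
    obtain b where "b \<in> B" using Suc.prems(4) by blast
    then have "x \<in> {1..n}"
      using B_fixed Suc.prems(2) nth_in_words[of b n "Suc m" 0] by auto
    then show ?thesis
      using cross_intersecting_card_le_fixed[OF n step Suc.prems(4,5) le0 _ B_fixed] by blast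
  next
    case A_fixed
    obtain a where "a \<in> A" using Suc.prems(3) by blast
    then have "x \<in> {1..n}"
      using A_fixed Suc.prems(1) nth_in_words[of a n "Suc m" 0] by auto
    then show ?thesis
      using cross_intersecting_card_le_fixed[OF n Suc.IH Suc.prems(2,1,3)
          cross_intersecting_sym[OF Suc.prems(1,2,5)] le0 _ A_fixed] by simp
  next
    case unfixed
    then show ?thesis
      using cross_intersecting_card_le_unfixed[OF n step Suc.prems(5)] by blast
  qed
qed

section \<open>Nontrivial intersecting families\<close>

definition saturated :: "nat \<Rightarrow> nat \<Rightarrow> nat list set \<Rightarrow> bool" where
  "saturated n k F \<longleftrightarrow> (\<forall>E\<in>words n k. (\<forall>u\<in>F. meets E u) \<longrightarrow> E \<in> F)"

lemma nontrivial_mono: "nontrivial k F \<Longrightarrow> F \<subseteq> H \<Longrightarrow> nontrivial k H"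
  unfolding nontrivial_def by blast

lemma nontrivial_intersecting_length_ge_3:
  assumes F: "F \<subseteq> words n k" and "intersecting F" and "nontrivial k F"
  shows "k \<ge> 3"
proof (rule ccontr)
  assume "\<not> k \<ge> 3"
  then consider "k = 0" | "k = 1" | "k = 2" by linarith
  moreover obtain v where v: "v \<in> F"
    using \<open>nontrivial k F\<close> unfolding nontrivial_def by blast
  moreover have meet: "\<exists>i<k. u!i = w!i" if "u \<in> F" "w \<in> F" for u w
  proof -
    have "meets u w"
      using that assms(2) unfolding intersecting_def cross_intersecting_def by blast
    moreover have "length u = k"
      using that(1) F length_words by blast
    ultimately show ?thesis by (simp add: meets_def)
  qed
  moreover have differ: "\<exists>w\<in>F. w!i \<noteq> u!i" if "i < k" for i u
    using that \<open>nontrivial k F\<close> unfolding nontrivial_def by blast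
  ultimately show False
  proof cases
    case 3
    obtain w0 w1 where w: "w0 \<in> F" "w0!0 \<noteq> v!0" "w1 \<in> F" "w1!1 \<noteq> v!1"
      using differ[of 0 v] differ[of 1 v] 3 by auto
    have "w0!1 = v!1" "w1!0 = v!0"
      using meet[OF w(1) v] meet[OF w(3) v] w 3 by (auto simp: less_2_cases_iff)
    then show False
      using meet[OF w(1,3)] w 3 by (auto simp: less_2_cases_iff)
  next
    case 1
    then show False using meet[OF v v] by simp
  next
    case 2
    then obtain w where "w \<in> F" "w!0 \<noteq> v!0"
      using differ[of 0 v] by auto
    then show False using meet[OF \<open>w \<in> F\<close> v] 2 by auto
  qed
qed

lemma intersecting_insert:
  assumes F: "F \<subseteq> words n (Suc k)" and FF: "intersecting F"
    and E: "E \<in> words n (Suc k)" "\<forall>u\<in>F. meets E u"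
  shows "intersecting (insert E F)"
proof -
  have "meets E E"
    using length_words[OF E(1)] by (intro meets_refl) auto
  moreover have "meets u E" if "u \<in> F" for u
  proof (rule meets_sym)
    show "length E = length u"
      using length_words[OF E(1)] length_words[OF subsetD[OF F that]] by simp
    show "meets E u"
      using E(2) that by blast
  qed
  moreover have "meets u v" if "u \<in> F" "v \<in> F" for u v
    using FF that unfolding intersecting_def cross_intersecting_def by blast
  ultimately show ?thesis
    using E(2) unfolding intersecting_def cross_intersecting_def by auto
qed

lemma ex_saturated_superset:
  assumes "F \<subseteq> words n (Suc k)" "intersecting F"
  obtains H where "F \<subseteq> H" "H \<subseteq> words n (Suc k)" "intersecting H" "saturated n (Suc k) H"
proof -
  define P where "P H \<longleftrightarrow> F \<subseteq> H \<and> H \<subseteq> words n (Suc k) \<and> intersecting H" for H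
  have "P F"
    using assms unfolding P_def by simp
  moreover have "\<forall>H. P H \<longrightarrow> card H < Suc (n ^ Suc k)"
  proof (intro allI impI)
    fix H assume "P H"
    then show "card H < Suc (n ^ Suc k)"
      using card_subset_words[of H n "Suc k"] unfolding P_def by simp
  qed
  ultimately obtain H where H: "P H" and max: "\<And>H'. P H' \<Longrightarrow> card H' \<le> card H"
    by (metis ex_has_greatest_nat)
  have "saturated n (Suc k) H"
    unfolding saturated_def
  proof (intro ballI impI)
    fix E assume E: "E \<in> words n (Suc k)" "\<forall>u\<in>H. meets E u"
    then have "P (insert E H)"
      using H intersecting_insert unfolding P_def by blast
    then have "card (insert E H) \<le> card H" by (rule max)
    moreover have "finite H"
      using H finite_subset_words unfolding P_def by blast
    ultimately show "E \<in> H"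
      by (auto simp: card_insert_if split: if_splits)
  qed
  with H that show thesis unfolding P_def by blast
qed

locale saturated_intersecting_family =
  fixes n m :: nat and F :: "nat list set"
  assumes n: "n \<ge> 2"
    and F_words: "F \<subseteq> words n (Suc m)"
    and intersecting: "intersecting F"
    and nontrivial: "nontrivial (Suc m) F"
    and saturated: "saturated n (Suc m) F"
begin

definition tails :: "nat list set" where
  "tails = {v. \<exists>y. y # v \<in> F}"

definition core :: "nat list set" where
  "core = {v \<in> tails. \<forall>u\<in>tails. meets v u}"

lemma tails_subset_words: "tails \<subseteq> words n m"
  unfolding tails_def using F_words by auto

lemma core_subset_tails: "core \<subseteq> tails"
  unfolding core_def by blast

lemma mem_FE:
  assumes "w \<in> F"
  obtains y v where "w = y # v" "y \<in> {1..n}" "v \<in> tails"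
proof -
  from assms F_words have "w \<in> words n (Suc m)" by blast
  then obtain y v where "w = y # v" "y \<in> {1..n}"
    by (rule in_words_SucE)
  with assms that show thesis
    unfolding tails_def by blast
qed

lemma meets_Cons_in_F: "y # v \<in> F \<Longrightarrow> z # u \<in> F \<Longrightarrow> meets (y # v) (z # u)"
  using intersecting unfolding intersecting_def cross_intersecting_def by blast

lemma Cons_core_in_F:
  assumes v: "v \<in> core" and y: "y \<in> {1..n}"
  shows "y # v \<in> F"
proof -
  have "y # v \<in> words n (Suc m)"
    using v y core_subset_tails tails_subset_words by auto
  moreover have "meets (y # v) w" if w: "w \<in> F" for w
  proof -
    obtain z u where "w = z # u" "z \<in> {1..n}" "u \<in> tails"
      using w by (rule mem_FE)
    with v show ?thesis
      unfolding core_def by simp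
  qed
  ultimately show ?thesis
    using saturated unfolding saturated_def by blast
qed

lemma core_if_two_heads:
  assumes v: "y # v \<in> F" "y' # v \<in> F" and "y \<noteq> y'"
  shows "v \<in> core"
proof -
  have "meets v u" if "z # u \<in> F" for z u
  proof (cases "z = y")
    case True
    then show ?thesis
      using meets_Cons_in_F[OF v(2) that] \<open>y \<noteq> y'\<close> by simp
  next
    case False
    then show ?thesis
      using meets_Cons_in_F[OF v(1) that] by simp
  qed
  with v(1) show ?thesis
    unfolding core_def tails_def by blast
qed

definition heads :: "nat list \<Rightarrow> nat set" where
  "heads v = {y. y # v \<in> F}"

lemma heads_core: "v \<in> core \<Longrightarrow> heads v = {1..n}"
  unfolding heads_def using Cons_core_in_F F_words by auto

lemma card_heads_not_core:
  assumes v: "v \<in> tails - core"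
  shows "card (heads v) = 1"
proof -
  obtain y where "y # v \<in> F"
    using v unfolding tails_def by blast
  moreover have "y' = y" if "y' # v \<in> F" for y'
    using core_if_two_heads[OF that \<open>y # v \<in> F\<close>] v by blast
  ultimately have "heads v = {y}"
    unfolding heads_def by blast
  then show ?thesis by simp
qed

lemma card_eq_sum_heads: "card F = (\<Sum>v\<in>tails. card (heads v))"
proof -
  have "bij_betw (\<lambda>(v, y). y # v) (SIGMA v:tails. heads v) F"
  proof (rule bij_betw_imageI)
    show "inj_on (\<lambda>(v, y). y # v) (SIGMA v:tails. heads v)"
      by (auto simp: inj_on_def)
    show "(\<lambda>(v, y). y # v) ` (SIGMA v:tails. heads v) = F"
    proof (intro equalityI subsetI)
      fix w assume "w \<in> F"
      then obtain y v where "w = y # v" "y \<in> {1..n}" "v \<in> tails"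
        by (rule mem_FE)
      with \<open>w \<in> F\<close> show "w \<in> (\<lambda>(v, y). y # v) ` (SIGMA v:tails. heads v)"
        unfolding heads_def by force
    qed (auto simp: heads_def)
  qed
  moreover have "finite (heads v)" for v
    by (rule finite_subset[of _ "{1..n}"]) (use F_words in \<open>auto simp: heads_def\<close>)
  ultimately show ?thesis
    using finite_subset_words[OF tails_subset_words]
    by (simp add: bij_betw_same_card[symmetric])
qed

lemma card_eq_tails_core: "card F = card tails + (n-1) * card core"
proof -
  have fin: "finite tails"
    using tails_subset_words by (rule finite_subset_words)
  have "card F = (\<Sum>v\<in>tails - core. card (heads v)) + (\<Sum>v\<in>core. card (heads v))"
    unfolding card_eq_sum_heads using core_subset_tails fin by (rule sum.subset_diff)
  also have "\<dots> = card (tails - core) + n * card core"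
    using heads_core card_heads_not_core by simp
  also have "card (tails - core) = card tails - card core"
    using core_subset_tails finite_subset[OF core_subset_tails fin] by (simp add: card_Diff_subset)
  finally show ?thesis
    using card_mono[OF fin core_subset_tails] mult_Suc[of "n - 1" "card core"] n by simp
qed

lemma cross_intersecting_slice_rest: "cross_intersecting (slice F y) (tails - slice F y)"
  unfolding cross_intersecting_def
proof (intro ballI)
  fix a u assume a: "a \<in> slice F y" and u: "u \<in> tails - slice F y"
  then obtain z where "z # u \<in> F" "z \<noteq> y"
    unfolding tails_def slice_def by blast
  moreover have "y # a \<in> F"
    using a unfolding slice_def by simp
  ultimately show "meets a u"
    using meets_Cons_in_F[of y a z u] by simp
qed

lemma cross_intersecting_tails_core: "cross_intersecting tails core"
  unfolding cross_intersecting_def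
proof (intro ballI)
  fix u v assume "u \<in> tails" "v \<in> core"
  then have "meets v u"
    unfolding core_def by blast
  moreover have "length v = length u"
    using length_words[OF subsetD[OF tails_subset_words \<open>u \<in> tails\<close>]]
      length_words[OF subsetD[OF tails_subset_words subsetD[OF core_subset_tails \<open>v \<in> core\<close>]]]
    by simp
  ultimately show "meets u v"
    by (rule meets_sym[rotated])
qed

lemma card_le_if_core_empty:
  assumes "core = {}"
  shows "card F \<le> meeting_count n m + (n-1)"
proof -
  obtain w0 where "w0 \<in> F"
    using nontrivial unfolding nontrivial_def by blast
  then obtain y0 a0 where w0: "w0 = y0 # a0" "y0 \<in> {1..n}" "a0 \<in> tails"
    by (rule mem_FE)
  obtain w1 where "w1 \<in> F" and w1_head: "w1!0 \<noteq> y0"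
    using nontrivial unfolding nontrivial_def by blast
  from \<open>w1 \<in> F\<close> obtain y1 u1 where w1: "w1 = y1 # u1" "y1 \<in> {1..n}" "u1 \<in> tails"
    by (rule mem_FE)
  with w1_head have "y1 \<noteq> y0" by simp
  let ?A = "slice F y0"
  let ?R = "tails - ?A"
  have A_tails: "?A \<subseteq> tails"
    unfolding slice_def tails_def by blast
  have "a0 \<in> ?A"
    using w0 \<open>w0 \<in> F\<close> unfolding slice_def by simp
  have "u1 \<notin> ?A"
  proof
    assume "u1 \<in> ?A"
    then have "u1 \<in> core"
      using core_if_two_heads[of y1 u1 y0] w1 \<open>w1 \<in> F\<close> \<open>y1 \<noteq> y0\<close> unfolding slice_def by simp
    with assms show False by simp
  qed
  with w1(3) have "u1 \<in> ?R" by blast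
  have "cross_intersecting ?A ?R"
    by (rule cross_intersecting_slice_rest)
  moreover have "?A \<subseteq> words n m" "?R \<subseteq> words n m" "?A \<noteq> {}" "?R \<noteq> {}"
    using A_tails tails_subset_words \<open>a0 \<in> ?A\<close> \<open>u1 \<in> ?R\<close> by auto
  ultimately have "card ?A + card ?R \<le> meeting_count n m + 1"
    using cross_intersecting_card_le[OF n] by simp
  moreover have "card tails = card ?A + card ?R"
    using card_Int_Diff[OF finite_subset_words[OF tails_subset_words], of ?A] A_tails
    by (simp add: Int_absorb1)
  moreover have "card F = card tails"
    using card_eq_tails_core assms by simp
  ultimately show ?thesis
    using n by linarith
qed

lemma card_le_if_core_fixed:
  assumes core: "core \<noteq> {}" and j: "j < m" and core_fixed: "\<forall>v\<in>core. v!j = x"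
  shows "card F \<le> meeting_count n m + (n-1)"
proof -
  obtain p where m: "m = Suc p" and jp: "j \<le> p"
    using j by (cases m) auto
  have tails: "tails \<subseteq> words n (Suc p)" and core_words: "core \<subseteq> words n (Suc p)"
    using tails_subset_words core_subset_tails m by auto
  obtain v0 where "v0 \<in> core"
    using core by blast
  then have x: "x \<in> {1..n}"
    using core_fixed core_words nth_in_words[of v0 n "Suc p" j] jp by auto
  note cross = cross_intersecting_tails_core
  let ?C = "remove_nth j ` core"
  let ?T = "meeting_all n p ?C"
  have "card tails \<le> n^p + (n-1) * card ?T"
    by (rule card_le_cross_fixed_coord[OF tails core_words cross jp x core_fixed])
  moreover have C_card: "card core = card ?C"
    using card_image[OF inj_on_remove_nth[OF core_words jp core_fixed]] by simp
  moreover have "card ?T + card ?C \<le> meeting_count n p + 1"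
  proof (rule cross_intersecting_card_le[OF n])
    show "?T \<subseteq> words n p" "cross_intersecting ?T ?C"
      unfolding meeting_all_def cross_intersecting_def by auto
    show "?C \<subseteq> words n p" "?C \<noteq> {}"
      using core core_words jp remove_nth_in_words by auto
    obtain w where "w \<in> F" "w!Suc j \<noteq> x"
      using nontrivial j unfolding nontrivial_def by blast
    from \<open>w \<in> F\<close> obtain y g where "w = y # g" "y \<in> {1..n}" "g \<in> tails"
      by (rule mem_FE)
    then have "remove_nth j g \<in> ?T"
      using remove_nth_in_meeting_all[OF tails core_words cross jp core_fixed]
        \<open>w!Suc j \<noteq> x\<close> by simp
    then show "?T \<noteq> {}" by blast
  qed
  then have "(n-1) * (card ?T + card ?C) \<le> (n-1) * (meeting_count n p + 1)"
    by (rule mult_le_mono2)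
  ultimately have "card F \<le> n^p + (n-1) * (meeting_count n p + 1)"
    unfolding card_eq_tails_core C_card add_mult_distrib2 by linarith
  then show ?thesis
    using meeting_count_Suc[of n p] m n by simp
qed

text \<open>\<open>F\<close> splits into the \<open>n\<close> layers given by the cyclic difference of its first two letters.\<close>
definition layer :: "nat \<Rightarrow> nat list set" where
  "layer c = {v \<in> words n m. cyclic_shift n c (v!0) # v \<in> F}"

lemma layer_subset_words: "layer c \<subseteq> words n m"
  unfolding layer_def by blast

lemma layer_intersecting:
  assumes c: "c < n" and m: "m \<ge> 1"
  shows "intersecting (layer c)"
  unfolding intersecting_def cross_intersecting_def
proof (intro ballI)
  fix v w assume v: "v \<in> layer c" and w: "w \<in> layer c"
  then have "meets (cyclic_shift n c (v!0) # v) (cyclic_shift n c (w!0) # w)"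
    unfolding layer_def using meets_Cons_in_F by blast
  then have "cyclic_shift n c (v!0) = cyclic_shift n c (w!0) \<or> meets v w"
    by simp
  moreover have "v!0 \<in> {1..n}" "w!0 \<in> {1..n}" "length v = m"
    using v w m nth_in_words length_words unfolding layer_def by auto
  ultimately consider "v!0 = w!0" | "meets v w"
    using cyclic_shift_inj[of "v!0" n "w!0" c] c by blast
  then show "meets v w"
  proof cases
    case 1
    then show ?thesis
      using \<open>length v = m\<close> m unfolding meets_def by (intro exI[of _ 0]) auto
  qed
qed

lemma core_subset_layer:
  assumes "c < n" "m \<ge> 1"
  shows "core \<subseteq> layer c"
proof
  fix v assume v: "v \<in> core"
  then have "v \<in> words n m"
    using core_subset_tails tails_subset_words by blast
  moreover have "cyclic_shift n c (v!0) \<in> {1..n}"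
    using nth_in_words[OF \<open>v \<in> words n m\<close>] assms cyclic_shift_in_range by simp
  ultimately show "v \<in> layer c"
    using Cons_core_in_F[OF v] unfolding layer_def by blast
qed

lemma card_eq_sum_layers:
  assumes m: "m \<ge> 1"
  shows "card F = (\<Sum>c<n. card (layer c))"
proof -
  let ?f = "\<lambda>(c, v). cyclic_shift n c (v!0) # v"
  have "bij_betw ?f (SIGMA c:{..<n}. layer c) F"
  proof (rule bij_betw_imageI)
    show "inj_on ?f (SIGMA c:{..<n}. layer c)"
    proof (rule inj_onI, clarsimp)
      fix c v c' assume "c < n" "c' < n" "v \<in> layer c"
        and "cyclic_shift n c (v!0) = cyclic_shift n c' (v!0)"
      then show "c = c'"
        using cyclic_shift_inj_amount[of "v!0" n c c'] nth_in_words m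
        unfolding layer_def by auto
    qed
    show "?f ` (SIGMA c:{..<n}. layer c) = F"
    proof (intro equalityI subsetI)
      fix w assume "w \<in> F"
      then obtain y v where w: "w = y # v" "y \<in> {1..n}" "v \<in> tails"
        by (rule mem_FE)
      then have "v \<in> words n m"
        using tails_subset_words by blast
      then have "v!0 \<in> {1..n}"
        using nth_in_words m by simp
      then obtain c where "c < n" "cyclic_shift n c (v!0) = y"
        using cyclic_shift_surj w(2) by blast
      with w \<open>w \<in> F\<close> \<open>v \<in> words n m\<close> show "w \<in> ?f ` (SIGMA c:{..<n}. layer c)"
        unfolding layer_def by force
    qed (auto simp: layer_def)
  qed
  then show ?thesis
    using finite_subset_words[OF layer_subset_words]
    by (simp add: bij_betw_same_card[symmetric])
qed

lemma card_le_if_core_nontrivial: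
  assumes core: "nontrivial m core"
    and IH: "\<And>p H. p < m \<Longrightarrow> H \<subseteq> words n (Suc p) \<Longrightarrow> intersecting H
      \<Longrightarrow> nontrivial (Suc p) H \<Longrightarrow> card H \<le> meeting_count n p + (n-1)"
  shows "card F \<le> meeting_count n m + (n-1)"
proof -
  have "intersecting core"
    using core_subset_tails unfolding intersecting_def cross_intersecting_def core_def by blast
  then have "m \<ge> 3"
    using nontrivial_intersecting_length_ge_3 core_subset_tails tails_subset_words core
    by (meson order_trans)
  then obtain p where m: "m = Suc p" and p: "p \<ge> 2"
    by (cases m) auto
  have layer_card: "card (layer c) \<le> meeting_count n p + (n-1)" if "c < n" for c
  proof (rule IH)
    show "p < m" "layer c \<subseteq> words n (Suc p)"
      using m layer_subset_words by auto
    show "intersecting (layer c)" "nontrivial (Suc p) (layer c)"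
      using layer_intersecting core_subset_layer nontrivial_mono[OF core] that m by auto
  qed
  have "card F = (\<Sum>c<n. card (layer c))"
    using m by (intro card_eq_sum_layers) simp
  also have "\<dots> \<le> (\<Sum>c<n. meeting_count n p + (n-1))"
    using layer_card by (intro sum_mono) simp
  also have "\<dots> = n * (meeting_count n p + (n-1)^1)"
    using n by simp
  also have "\<dots> \<le> meeting_count n m + (n-1)"
    using mult_meeting_count_le[of n 1 p] m p n by simp
  finally show ?thesis .
qed

end

theorem intersecting_nontrivial_card_le:
  assumes n: "n \<ge> 2"
  shows "F \<subseteq> words n (Suc m) \<Longrightarrow> intersecting F \<Longrightarrow> nontrivial (Suc m) F
    \<Longrightarrow> card F \<le> meeting_count n m + (n-1)"
proof (induction m arbitrary: F rule: less_induct)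
  case (less m)
  obtain H where H: "F \<subseteq> H" "H \<subseteq> words n (Suc m)" "intersecting H" "saturated n (Suc m) H"
    using ex_saturated_superset[OF less.prems(1,2)] .
  interpret saturated_intersecting_family n m H
    using n H nontrivial_mono[OF less.prems(3) H(1)] by unfold_locales
  have "card H \<le> meeting_count n m + (n-1)"
  proof (cases "core = {}")
    case True
    then show ?thesis by (rule card_le_if_core_empty)
  next
    case False
    show ?thesis
    proof (cases "nontrivial m core")
      case True
      then show ?thesis using less.IH by (rule card_le_if_core_nontrivial)
    next
      case trivial: False
      then obtain j x where "j < m" "\<forall>v\<in>core. v!j = x"
        using False unfolding nontrivial_def by blast
      with False show ?thesis by (rule card_le_if_core_fixed)
    qed
  qed
  moreover have "card F \<le> card H"
    using finite_subset_words[OF H(2)] H(1) by (rule card_mono)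
  ultimately show ?case by linarith
qed

definition extremal_family :: "nat \<Rightarrow> nat \<Rightarrow> nat list set" where
  "extremal_family n m =
    Cons 1 ` {v \<in> words n m. meets v (replicate m 2)} \<union> (\<lambda>y. y # replicate m 2) ` {2..n}"

context
  fixes n m :: nat
  assumes n: "n \<ge> 2" and m: "m \<ge> 2"
begin

lemma replicate_2_in_words: "replicate m 2 \<in> words n m"
  using n unfolding words_def by auto

lemma meets_replicate_2: "meets (replicate m 2) (replicate m 2)"
  using m by (intro meets_refl) auto

lemma extremal_family_subset_words: "extremal_family n m \<subseteq> words n (Suc m)"
  using replicate_2_in_words n unfolding extremal_family_def by auto

lemma intersecting_extremal_family: "intersecting (extremal_family n m)"
  unfolding intersecting_def cross_intersecting_def extremal_family_def
proof (intro ballI)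
  let ?b = "replicate m (2::nat)"
  have "meets ?b v" if "v \<in> words n m" "meets v ?b" for v
  proof (rule meets_sym)
    show "length v = length ?b"
      using length_words[OF that(1)] by simp
  qed (rule that(2))
  moreover fix u v
  assume "u \<in> Cons 1 ` {v \<in> words n m. meets v ?b} \<union> (\<lambda>y. y # ?b) ` {2..n}"
    and "v \<in> Cons 1 ` {v \<in> words n m. meets v ?b} \<union> (\<lambda>y. y # ?b) ` {2..n}"
  ultimately show "meets u v"
    using meets_replicate_2 by auto
qed

lemma nontrivial_extremal_family: "nontrivial (Suc m) (extremal_family n m)"
proof -
  let ?b = "replicate m (2::nat)"
  let ?F = "extremal_family n m"
  have "1 # ?b \<in> ?F" "2 # ?b \<in> ?F"
    using replicate_2_in_words meets_replicate_2 n unfolding extremal_family_def by auto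
  have one: "1 # ?b[i := 1] \<in> ?F" if i: "i < m" for i
  proof -
    obtain k where "k < m" "k \<noteq> i"
      using m by (intro that[of "if i = 0 then 1 else 0"]) auto
    then have "meets (?b[i := 1]) ?b"
      unfolding meets_def by (intro exI[of _ k]) auto
    moreover have "?b[i := 1] \<in> words n m"
      using replicate_2_in_words n i unfolding words_def
      by (auto dest!: subsetD[OF set_update_subset_insert])
    ultimately show ?thesis
      unfolding extremal_family_def by blast
  qed
  have differ: "\<exists>u\<in>?F. \<exists>v\<in>?F. u!i \<noteq> v!i" if i: "i < Suc m" for i
  proof (cases i)
    case 0
    then show ?thesis
      using \<open>1 # ?b \<in> ?F\<close> \<open>2 # ?b \<in> ?F\<close> by force
  next
    case (Suc i')
    then have "(1 # ?b[i' := 1])!i \<noteq> (2 # ?b)!i"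
      using i by simp
    then show ?thesis
      using one[of i'] \<open>2 # ?b \<in> ?F\<close> Suc i by blast
  qed
  show ?thesis
    unfolding nontrivial_def
  proof (intro conjI allI impI)
    show "?F \<noteq> {}"
      using \<open>1 # ?b \<in> ?F\<close> by blast
    fix i x assume "i < Suc m"
    then obtain u v where "u \<in> ?F" "v \<in> ?F" "u!i \<noteq> v!i"
      using differ by blast
    then show "\<exists>v\<in>?F. v!i \<noteq> x"
      by metis
  qed
qed

lemma card_extremal_family: "card (extremal_family n m) = meeting_count n m + (n-1)"
proof -
  let ?b = "replicate m (2::nat)"
  have "card (Cons 1 ` {v \<in> words n m. meets v ?b}) = meeting_count n m"
    using card_meeting[OF replicate_2_in_words] by (simp add: card_image)
  moreover have "card ((\<lambda>y. y # ?b) ` {2..n}) = n - 1"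
    by (simp add: card_image inj_on_def)
  ultimately show ?thesis
    unfolding extremal_family_def by (subst card_Un_disjoint) auto
qed

end

section \<open>The hypergraph formulation\<close>

lemma box_replicate: "box (replicate r n) = words n r"
  unfolding box_def words_def by (force simp: in_set_conv_nth)

lemma edge_disjoint_iff_not_meets: "edge_disjoint u v \<longleftrightarrow> \<not> meets u v"
  unfolding edge_disjoint_def meets_def by auto

lemma intersecting_iff_matchings_le_1:
  assumes F: "F \<subseteq> words n r" and r: "r \<ge> 1"
  shows "intersecting F \<longleftrightarrow> (\<forall>M. M \<subseteq> F \<and> pairwise edge_disjoint M \<longrightarrow> card M \<le> 1)"
proof
  assume I: "intersecting F"
  show "\<forall>M. M \<subseteq> F \<and> pairwise edge_disjoint M \<longrightarrow> card M \<le> 1"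
  proof (intro allI impI)
    fix M assume M: "M \<subseteq> F \<and> pairwise edge_disjoint M"
    then have "finite M"
      using finite_subset_words[OF F] finite_subset by blast
    moreover have "\<forall>u\<in>M. \<forall>v\<in>M. u = v"
      using M I unfolding intersecting_def cross_intersecting_def pairwise_def
        edge_disjoint_iff_not_meets by blast
    ultimately show "card M \<le> 1"
      by (simp add: card_le_Suc0_iff_eq)
  qed
next
  assume small: "\<forall>M. M \<subseteq> F \<and> pairwise edge_disjoint M \<longrightarrow> card M \<le> 1"
  show "intersecting F"
    unfolding intersecting_def cross_intersecting_def
  proof (intro ballI, rule ccontr)
    fix u v assume uv: "u \<in> F" "v \<in> F" "\<not> meets u v"
    have "length u = r" "length v = r"
      using uv F length_words by blast+
    then have "u \<noteq> []" "length v = length u"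
      using r by auto
    then have "u \<noteq> v" "\<not> meets v u"
      using uv(3) meets_refl meets_sym by blast+
    with uv have "{u, v} \<subseteq> F" "pairwise edge_disjoint {u, v}"
      unfolding pairwise_def edge_disjoint_iff_not_meets by auto
    then have "card {u, v} \<le> 1"
      using small by blast
    with \<open>u \<noteq> v\<close> show False by simp
  qed
qed

lemma matching_number_le_1_iff:
  assumes F: "F \<subseteq> words n r" and r: "r \<ge> 1"
  shows "matching_number F \<le> 1 \<longleftrightarrow> intersecting F"
proof -
  let ?S = "{card M | M. M \<subseteq> F \<and> pairwise edge_disjoint M}"
  have "finite ?S"
    using finite_subset_words[OF F] by simp
  moreover have "card {} \<in> ?S"
    by (intro CollectI exI[of _ "{}"]) simp
  then have "?S \<noteq> {}"
    by blast
  ultimately have "matching_number F \<le> 1 \<longleftrightarrow> (\<forall>s\<in>?S. s \<le> 1)"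
    unfolding matching_number_def by (rule Max_le_iff)
  also have "\<dots> \<longleftrightarrow> intersecting F"
    unfolding intersecting_iff_matchings_le_1[OF F r] by auto
  finally show ?thesis .
qed

lemma all_card_gt_1_iff:
  assumes "\<And>T. P T \<Longrightarrow> finite T"
  shows "(\<forall>T. P T \<longrightarrow> 1 < card T) \<longleftrightarrow> \<not> P {} \<and> (\<forall>x. \<not> P {x})"
proof
  assume H: "\<forall>T. P T \<longrightarrow> 1 < card T"
  show "\<not> P {} \<and> (\<forall>x. \<not> P {x})"
    using H[rule_format, of "{}"] H[rule_format, of "{_}"] by auto
next
  assume none: "\<not> P {} \<and> (\<forall>x. \<not> P {x})"
  show "\<forall>T. P T \<longrightarrow> 1 < card T"
  proof (intro allI impI)
    fix T assume T: "P T"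
    show "1 < card T"
    proof (rule ccontr)
      assume "\<not> 1 < card T"
      then have "card T = 0 \<or> card T = 1"
        by linarith
      then have "T = {} \<or> (\<exists>x. T = {x})"
        using card_0_eq[OF assms[OF T]] card_1_singleton_iff[of T] by auto
      with none T show False by blast
    qed
  qed
qed

lemma vertices_replicate: "vertices (replicate r n) = {..<r} \<times> {1..n}"
  unfolding vertices_def by auto

lemma is_transversal_singleton_iff:
  assumes F: "F \<subseteq> words n r" "F \<noteq> {}"
  shows "is_transversal (replicate r n) F {(i, x)} \<longleftrightarrow> i < r \<and> (\<forall>v\<in>F. v!i = x)"
proof
  assume "is_transversal (replicate r n) F {(i, x)}"
  then show "i < r \<and> (\<forall>v\<in>F. v!i = x)"
    unfolding is_transversal_def vertices_replicate by blast
next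
  assume ix: "i < r \<and> (\<forall>v\<in>F. v!i = x)"
  obtain v where "v \<in> F"
    using F(2) by blast
  then have "x \<in> {1..n}"
    using ix nth_in_words[OF subsetD[OF F(1)], of v i] by simp
  moreover have "i < length v" if "v \<in> F" for v
    using ix length_words[OF subsetD[OF F(1) that]] by simp
  ultimately show "is_transversal (replicate r n) F {(i, x)}"
    using ix unfolding is_transversal_def vertices_replicate by blast
qed

lemma one_less_transversal_number_iff:
  assumes F: "F \<subseteq> words n r" and r: "r \<ge> 1"
  shows "1 < transversal_number (replicate r n) F \<longleftrightarrow> nontrivial r F"
proof -
  let ?ns = "replicate r n"
  let ?S = "{card T | T. is_transversal ?ns F T}"
  have "finite ?S"
    unfolding is_transversal_def vertices_replicate by simp
  moreover have "is_transversal ?ns F (vertices ?ns)"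
    unfolding is_transversal_def
  proof (intro conjI subset_refl ballI)
    fix v assume "v \<in> F"
    then have "v \<in> words n r"
      using F by blast
    then have "(0, v!0) \<in> vertices ?ns" "0 < length v"
      using r nth_in_words[of v n r 0] length_words[of v n r] unfolding vertices_replicate by auto
    then show "\<exists>l<length v. (l, v!l) \<in> vertices ?ns" by blast
  qed
  then have "?S \<noteq> {}" by blast
  ultimately have "1 < transversal_number ?ns F \<longleftrightarrow> (\<forall>s\<in>?S. 1 < s)"
    unfolding transversal_number_def by (rule Min_gr_iff)
  also have "\<dots> \<longleftrightarrow> (\<forall>T. is_transversal ?ns F T \<longrightarrow> 1 < card T)"
    by auto
  also have "\<dots> \<longleftrightarrow> \<not> is_transversal ?ns F {} \<and> (\<forall>p. \<not> is_transversal ?ns F {p})"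
  proof (rule all_card_gt_1_iff)
    show "finite T" if "is_transversal ?ns F T" for T
      using that unfolding is_transversal_def vertices_replicate
      by (rule finite_subset[OF conjunct1]) simp
  qed
  also have "\<dots> \<longleftrightarrow> nontrivial r F"
  proof (cases "F = {}")
    case True
    then show ?thesis
      unfolding nontrivial_def is_transversal_def by simp
  next
    case False
    then have "\<not> is_transversal ?ns F {}"
      unfolding is_transversal_def by blast
    with False show ?thesis
      using is_transversal_singleton_iff[OF F False] unfolding nontrivial_def by auto
  qed
  finally show ?thesis .
qed

lemma m0_1_replicate:
  assumes "r \<ge> 1"
  shows "m0 1 (replicate r n) = Max {card F | F. F \<subseteq> words n r \<and> intersecting F \<and> nontrivial r F}"
proof -
  have "F \<subseteq> box (replicate r n) \<and> matching_number F \<le> 1 \<and> 1 < transversal_number (replicate r n) F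
      \<longleftrightarrow> F \<subseteq> words n r \<and> intersecting F \<and> nontrivial r F" for F
    using matching_number_le_1_iff[of F n r] one_less_transversal_number_iff[of F n r] assms
    unfolding box_replicate by auto
  then show ?thesis
    unfolding m0_def by simp
qed

theorem theorem1p1:
  fixes r n :: nat
  assumes "r \<ge> 3" and "n \<ge> 2"
  shows "int (m0 1 (replicate r n)) = int n ^ (r - 1) - int (n - 1) ^ (r - 1) + int n - 1"
proof -
  obtain m where r: "r = Suc m" and m: "m \<ge> 2"
    using assms(1) by (cases r) auto
  let ?admissible = "\<lambda>F. F \<subseteq> words n r \<and> intersecting F \<and> nontrivial r F"
  have "m0 1 (replicate r n) = Max {card F | F. ?admissible F}"
    using assms(1) by (intro m0_1_replicate) simp
  also have "\<dots> = meeting_count n m + (n-1)"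
  proof (rule Max_eqI)
    show "finite {card F | F. ?admissible F}"
      by (rule finite_subset[of _ "card ` Pow (words n r)"]) auto
    show "s \<le> meeting_count n m + (n-1)" if "s \<in> {card F | F. ?admissible F}" for s
      using that intersecting_nontrivial_card_le[OF assms(2)] unfolding r by blast
    have "?admissible (extremal_family n m)"
      using extremal_family_subset_words intersecting_extremal_family nontrivial_extremal_family
        assms(2) m unfolding r by blast
    then show "meeting_count n m + (n-1) \<in> {card F | F. ?admissible F}"
      using card_extremal_family[OF assms(2) m] by (intro CollectI exI[of _ "extremal_family n m"]) simp
  qed
  finally show ?thesis
    using r assms(2) by (simp add: of_nat_meeting_count of_nat_diff)
qed

end
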